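(* Let $\alpha,a,b\in\mathbb{C}$ be such that none of $\alpha+a,\alpha-a,\alpha+b,\alpha-b$ belongs to $\{0,-1,-2,\ldots\}$. Then \[ \sum_{k=0}^{\infty}\frac{k+\alpha}{((k+\alpha)^2-a^2)((k+\alpha)^2-b^2)} =\frac12\sum_{n=1}^{\infty}\frac{(-1)^{n-1}(1\pm a\pm b)_{n-1}(\alpha\pm a)_{n-1}(\alpha\pm b)_{n-1}}{n\binom{2n}{n}(\alpha\pm a)_{2n}(\alpha\pm b)_{2n}}\,q(n), \] where \[ q(n)=2(2n-1)(3n+2\alpha-3)((2n+\alpha-1)^2-a^2)((2n+\alpha-1)^2-b^2)+((n+\alpha-1)^2-a^2)((n+\alpha-1)^2-b^2)\bigl(13n^2-10n(1-\alpha)+2(1-\alpha)^2-a^2-b^2\bigr). \]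
   Context: $(x)_n=x(x+1)\cdots(x+n-1)$, $(x)_0=1$. The notation $(u\pm v\pm w)_m$ denotes $(u+v+w)_m(u+v-w)_m(u-v+w)_m(u-v-w)_m$, and $(u\pm v)_m=(u+v)_m(u-v)_m$. *)

theory Defs
  imports Complex_Main
begin

definition q4 :: "complex \<Rightarrow> complex \<Rightarrow> complex \<Rightarrow> nat \<Rightarrow> complex" where
  "q4 \<alpha> a b n =
     2 * (2 * of_nat n - 1) * (3 * of_nat n + 2 * \<alpha> - 3)
       * ((2 * of_nat n + \<alpha> - 1)^2 - a^2) * ((2 * of_nat n + \<alpha> - 1)^2 - b^2)
   + ((of_nat n + \<alpha> - 1)^2 - a^2) * ((of_nat n + \<alpha> - 1)^2 - b^2)
       * (13 * of_nat n ^ 2 - 10 * of_nat n * (1 - \<alpha>) + 2 * (1 - \<alpha>)^2 - a^2 - b^2)"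

text \<open>The n-th summand (n \<ge> 1) of the right-hand series, without the factor 1/2.\<close>
definition rhs4 :: "complex \<Rightarrow> complex \<Rightarrow> complex \<Rightarrow> nat \<Rightarrow> complex" where
  "rhs4 \<alpha> a b n =
     ((-1) ^ (n - 1)
       * pochhammer (1 + a + b) (n - 1) * pochhammer (1 + a - b) (n - 1)
       * pochhammer (1 - a + b) (n - 1) * pochhammer (1 - a - b) (n - 1)
       * pochhammer (\<alpha> + a) (n - 1) * pochhammer (\<alpha> - a) (n - 1)
       * pochhammer (\<alpha> + b) (n - 1) * pochhammer (\<alpha> - b) (n - 1))
     / (of_nat n * of_nat ((2 * n) choose n)
       * pochhammer (\<alpha> + a) (2 * n) * pochhammer (\<alpha> - a) (2 * n)
       * pochhammer (\<alpha> + b) (2 * n) * pochhammer (\<alpha> - b) (2 * n))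
     * q4 \<alpha> a b n"

definition lhs4 :: "complex \<Rightarrow> complex \<Rightarrow> complex \<Rightarrow> nat \<Rightarrow> complex" where
  "lhs4 \<alpha> a b k =
     (of_nat k + \<alpha>) / (((of_nat k + \<alpha>)^2 - a^2) * ((of_nat k + \<alpha>)^2 - b^2))"

end

theory Submission
  imports Defs "HOL-Analysis.Analysis"
begin

text \<open>
  Write \<open>D(y) = (y\<^sup>2 - a\<^sup>2)(y\<^sup>2 - b\<^sup>2)\<close> and
  \<open>c(n) = (-1)\<^sup>n (1 \<plusminus> a \<plusminus> b)\<^sub>n / (2 binom(2n, n))\<close>. Then
  \<open>F(n,k) = c(n) (2(\<alpha>+k)+n) / \<Prod>(i \<le> n) D(\<alpha>+k+i)\<close> and
  \<open>G(n,k) = c(n) R\<^sub>n(\<alpha>+k) / (2(2n+1) \<Prod>(i \<le> n) D(\<alpha>+k+i))\<close>, for a quadratic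
  \<open>R\<^sub>n\<close>, form a WZ pair, \<open>F(n+1,k) - F(n,k) = G(n,k+1) - G(n,k)\<close>, and \<open>F(0,k)\<close> is the
  summand on the left. Summing the WZ equation over \<open>k \<ge> n\<close> (Markov's form of the WZ
  method) turns \<open>\<Sum>k. F(0,k)\<close> into \<open>\<Sum>n. F(n,n) + G(n,n+1)\<close>, and these diagonal terms
  are half the terms of the right-hand series. The tails \<open>\<Sum>k. F(N,k+N)\<close> vanish because
  the numerator \<open>(1 \<plusminus> a \<plusminus> b)\<^sub>N\<close> is eventually dominated by the denominator, which gives
  the bound \<open>(3/4)\<^sup>N 32/(k+1)\<^sup>2\<close>.
\<close>


lemma summable_wz_Suc_iff:
  fixes F G :: "nat \<Rightarrow> nat \<Rightarrow> 'a::real_normed_vector"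
  assumes wz: "\<And>k. F (Suc n) k - F n k = G n (Suc k) - G n k"
    and G_lim: "G n \<longlonglongrightarrow> 0"
  shows "summable (F (Suc n)) \<longleftrightarrow> summable (F n)"
proof -
  have tele: "summable (\<lambda>k. G n (Suc k) - G n k)"
    using telescope_summable[OF G_lim] .
  have "F (Suc n) = (\<lambda>k. F n k + (G n (Suc k) - G n k))"
    using wz by (simp add: fun_eq_iff algebra_simps)
  then show ?thesis
    using summable_add[OF _ tele, of "F n"] summable_diff[OF _ tele, of "F (Suc n)"] by auto
qed

lemma summable_wz_iff:
  fixes F G :: "nat \<Rightarrow> nat \<Rightarrow> 'a::real_normed_vector"
  assumes "\<And>n k. F (Suc n) k - F n k = G n (Suc k) - G n k"
    and "\<And>n. G n \<longlonglongrightarrow> 0"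
  shows "summable (F n) \<longleftrightarrow> summable (F m)"
proof -
  have "summable (F n) \<longleftrightarrow> summable (F 0)" for n
    by (induction n) (simp_all add: summable_wz_Suc_iff assms)
  then show ?thesis by metis
qed

lemma wz_diagonal_sums:
  fixes F G :: "nat \<Rightarrow> nat \<Rightarrow> 'a::real_normed_vector"
  assumes wz: "\<And>n k. F (Suc n) k - F n k = G n (Suc k) - G n k"
    and G_lim: "\<And>n. G n \<longlonglongrightarrow> 0"
    and summable: "\<And>n. summable (F n)"
    and tail_lim: "(\<lambda>N. \<Sum>k. F N (k + N)) \<longlonglongrightarrow> 0"
  shows "(\<lambda>n. F n n + G n (Suc n)) sums (\<Sum>k. F 0 k)"
proof -
  define U where "U N = (\<Sum>k. F N (k + N))" for N
  \<comment> \<open>Summing the WZ equation at \<open>n\<close> over \<open>k > n\<close> telescopes.\<close>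
  have step: "U n - U (Suc n) = F n n + G n (Suc n)" for n
  proof -
    have sF: "summable (\<lambda>k. F n (k + Suc n))"
      using summable_iff_shift[of "F n" "Suc n"] summable by blast
    have "U n = F n n + (\<Sum>k. F n (k + Suc n))"
      using suminf_split_head[of "\<lambda>k. F n (k + n)"] summable[of n] by (simp add: U_def)
    moreover have "(\<lambda>k. F (Suc n) (k + Suc n))
        sums ((\<Sum>k. F n (k + Suc n)) + (0 - G n (0 + Suc n)))"
    proof -
      have "(\<lambda>k. F n (k + Suc n) + (G n (Suc k + Suc n) - G n (k + Suc n)))
          sums ((\<Sum>k. F n (k + Suc n)) + (0 - G n (0 + Suc n)))"
        by (intro sums_add summable_sums sF telescope_sums LIMSEQ_ignore_initial_segment G_lim)
      moreover have "F (Suc n) k = F n k + (G n (Suc k) - G n k)" for k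
        using wz[of n k] by (simp add: algebra_simps)
      ultimately show ?thesis by simp
    qed
    ultimately show ?thesis by (simp add: U_def sums_iff)
  qed
  have "(\<Sum>n<N. F n n + G n (Suc n)) = U 0 - U N" for N
    by (induction N) (simp_all add: step[symmetric])
  moreover have "(\<lambda>N. U 0 - U N) \<longlonglongrightarrow> U 0 - 0"
    by (intro tendsto_intros) (use tail_lim in \<open>simp add: U_def\<close>)
  ultimately show ?thesis by (simp add: sums_def U_def)
qed

definition quartic :: "'a::comm_ring_1 \<Rightarrow> 'a \<Rightarrow> 'a \<Rightarrow> 'a" where
  "quartic a b y = (y\<^sup>2 - a\<^sup>2) * (y\<^sup>2 - b\<^sup>2)"

definition quartic_block :: "'a::comm_ring_1 \<Rightarrow> 'a \<Rightarrow> nat \<Rightarrow> 'a \<Rightarrow> 'a" where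
  "quartic_block a b n y = (\<Prod>i<Suc n. quartic a b (y + of_nat i))"

lemma quartic_factor: "quartic a b y = (y - a) * (y + a) * (y - b) * (y + b)"
  unfolding quartic_def by (simp add: power2_eq_square algebra_simps)

lemma pochhammer_quartic:
  "pochhammer (x + a) m * pochhammer (x - a) m * pochhammer (x + b) m * pochhammer (x - b) m
     = (\<Prod>i<m. quartic a b (x + of_nat i))"
proof (induction m)
  case (Suc m)
  then show ?case
    by (simp add: pochhammer_Suc prod.lessThan_Suc quartic_factor algebra_simps)
qed simp

lemma quartic_block_Suc:
  "quartic_block a b (Suc n) y = quartic_block a b n y * quartic a b (y + of_nat n + 1)"
  unfolding quartic_block_def by (simp add: prod.lessThan_Suc add_ac)

lemma quartic_block_Suc': "quartic_block a b (Suc n) y = quartic a b y * quartic_block a b n (y + 1)"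
  unfolding quartic_block_def prod.lessThan_Suc_shift by (simp add: add_ac)

lemma pochhammer_quartic_add:
  "pochhammer (x + a) (m + Suc n) * pochhammer (x - a) (m + Suc n)
     * pochhammer (x + b) (m + Suc n) * pochhammer (x - b) (m + Suc n)
     = (\<Prod>i<m. quartic a b (x + of_nat i)) * quartic_block a b n (x + of_nat m)"
  unfolding pochhammer_quartic
  by (induction n) (simp_all add: quartic_block_def prod.lessThan_Suc add_ac mult_ac)

lemma norm_pochhammer_le:
  fixes z :: "'a::real_normed_field"
  assumes "norm z \<le> r"
  shows "norm (pochhammer z n) \<le> pochhammer r n"
proof (induction n)
  case (Suc n)
  have "0 \<le> r" using assms norm_ge_zero order_trans by blast
  then have "0 \<le> pochhammer r n" unfolding pochhammer_prod by (intro prod_nonneg) auto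
  then have "norm (pochhammer z n) * norm (z + of_nat n) \<le> pochhammer r n * (r + of_nat n)"
    using Suc norm_triangle_ineq[of z "of_nat n"] assms
    by (intro mult_mono) auto
  then show ?case by (simp add: pochhammer_Suc norm_mult)
qed simp

lemma norm_quartic_shift_ge:
  fixes x a b :: "'a::real_normed_field"
  assumes "norm x + norm a + norm b \<le> real m"
  shows "(real m - (norm x + norm a + norm b))^4 \<le> norm (quartic a b (x + of_nat m))"
proof -
  define t where "t = real m - (norm x + norm a + norm b)"
  have factor: "t \<le> norm (x + of_nat m + s)" if "norm s \<le> norm a + norm b" for s
  proof -
    have "real m \<le> norm (x + of_nat m + s) + norm x + norm s"
      using norm_triangle_ineq4[of "x + of_nat m + s" "x + s"] norm_triangle_ineq[of x s]
      by (simp add: norm_of_nat)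
    then show ?thesis using that by (simp add: t_def)
  qed
  have "t * t * t * t \<le> norm (x + of_nat m + - a) * norm (x + of_nat m + a)
      * norm (x + of_nat m + - b) * norm (x + of_nat m + b)"
    using assms by (intro mult_mono factor) (auto simp: t_def)
  then show ?thesis
    by (simp add: t_def quartic_factor norm_mult power4_eq_xxxx)
qed

lemma norm_quartic_block_ge:
  fixes x a b :: "'a::real_normed_field"
  assumes "norm x + norm a + norm b \<le> real m"
  shows "(\<Prod>i<Suc n. (real (m + i) - (norm x + norm a + norm b))^4)
      \<le> norm (quartic_block a b n (x + of_nat m))"
  unfolding quartic_block_def prod_norm[symmetric]
  using assms norm_quartic_shift_ge[of x a b "m + _"]
  by (intro prod_mono) (auto simp: add.assoc)

lemma quadratic_over_quartic_tendsto_zero: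
  fixes a b w v u :: "'a::real_normed_field"
  shows "((\<lambda>y. (u * y\<^sup>2 + v * y + w) / quartic a b y) \<longlongrightarrow> 0) at_infinity"
proof -
  have "((\<lambda>y. (u * inverse y ^ 2 + v * inverse y ^ 3 + w * inverse y ^ 4)
      / ((1 - a\<^sup>2 * inverse y ^ 2) * (1 - b\<^sup>2 * inverse y ^ 2))) \<longlongrightarrow>
      (u * 0 ^ 2 + v * 0 ^ 3 + w * 0 ^ 4) / ((1 - a\<^sup>2 * 0 ^ 2) * (1 - b\<^sup>2 * 0 ^ 2))) at_infinity"
    by (intro tendsto_intros tendsto_inverse_0) simp
  moreover have "\<forall>\<^sub>F y in at_infinity. (u * inverse y ^ 2 + v * inverse y ^ 3 + w * inverse y ^ 4)
      / ((1 - a\<^sup>2 * inverse y ^ 2) * (1 - b\<^sup>2 * inverse y ^ 2))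
      = (u * y\<^sup>2 + v * y + w) / quartic a b y"
    unfolding eventually_at_infinity
  proof (intro exI allI impI)
    fix y :: 'a assume "1 \<le> norm y"
    then have "y \<noteq> 0" by auto
    have "u * inverse y ^ 2 + v * inverse y ^ 3 + w * inverse y ^ 4 = (u * y\<^sup>2 + v * y + w) / y ^ 4"
      using \<open>y \<noteq> 0\<close> by (simp add: field_simps eval_nat_numeral)
    moreover have "(1 - a\<^sup>2 * inverse y ^ 2) * (1 - b\<^sup>2 * inverse y ^ 2) = quartic a b y / y ^ 4"
      using \<open>y \<noteq> 0\<close> unfolding quartic_def by (simp add: field_simps eval_nat_numeral)
    ultimately show "(u * inverse y ^ 2 + v * inverse y ^ 3 + w * inverse y ^ 4)
      / ((1 - a\<^sup>2 * inverse y ^ 2) * (1 - b\<^sup>2 * inverse y ^ 2))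
      = (u * y\<^sup>2 + v * y + w) / quartic a b y"
      using \<open>y \<noteq> 0\<close> by simp
  qed
  ultimately show ?thesis by (simp add: tendsto_cong)
qed

lemma quadratic_over_quartic_shift_tendsto_zero:
  fixes a b w v u s :: "'a::real_normed_field"
  shows "(\<lambda>k. (u * (s + of_nat k)\<^sup>2 + v * (s + of_nat k) + w) / quartic a b (s + of_nat k)) \<longlonglongrightarrow> 0"
proof -
  have "filterlim (\<lambda>k. s + of_nat k :: 'a) at_infinity sequentially"
    by (rule tendsto_add_filterlim_at_infinity[OF tendsto_const tendsto_of_nat])
  then show ?thesis
    using filterlim_compose[OF quadratic_over_quartic_tendsto_zero] by blast
qed

lemma inverse_quartic_shift_tendsto_zero:
  fixes a b s :: "'a::real_normed_field"
  shows "(\<lambda>k. inverse (quartic a b (s + of_nat k))) \<longlonglongrightarrow> 0"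
  using quadratic_over_quartic_shift_tendsto_zero[where u = 0 and v = 0 and w = 1]
  by (simp add: divide_inverse)

lemma pochhammer_pow4_le_geometric:
  fixes A :: real
  assumes "0 \<le> A" and "4 * A + 1 \<le> real N" and "N \<le> M"
  shows "pochhammer (1 + A) N ^ 4 \<le> (3/4)^N * (\<Prod>i<N. (real (M + Suc i) - A)^4)"
proof -
  have "pochhammer (1 + A) N ^ 4 = (\<Prod>i<N. (1 + A + real i)^4)"
    unfolding pochhammer_prod atLeast0LessThan prod_power_distrib ..
  also have "\<dots> \<le> (\<Prod>i<N. 3/4 * (real (M + Suc i) - A)^4)"
  proof (rule prod_mono)
    fix i assume "i \<in> {..<N}"
    then have "real i + 1 \<le> real N" "real N \<le> real M" using assms by simp_all
    then have "1 + 7 * A + real i \<le> 3 * real M"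
      using assms by linarith
    then have "1 + A + real i \<le> 3/4 * (real M + real i + 1 - A)"
      by (simp add: field_simps)
    then have lin: "1 + A + real i \<le> 3/4 * (real (M + Suc i) - A)"
      by (simp add: add_ac)
    have "0 \<le> real (M + Suc i) - A" using assms by simp
    have "(1 + A + real i)^4 \<le> (3/4 * (real (M + Suc i) - A))^4"
      using assms by (intro power_mono lin) auto
    also have "\<dots> = (3/4)^4 * (real (M + Suc i) - A)^4"
      by (rule power_mult_distrib)
    also have "\<dots> \<le> 3/4 * (real (M + Suc i) - A)^4"
      by (intro mult_right_mono zero_le_power \<open>0 \<le> real (M + Suc i) - A\<close>) (simp add: eval_nat_numeral)
    finally show "0 \<le> (1 + A + real i)^4 \<and> (1 + A + real i)^4 \<le> 3/4 * (real (M + Suc i) - A)^4"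
      by simp
  qed
  also have "\<dots> = (3/4)^N * (\<Prod>i<N. (real (M + Suc i) - A)^4)"
    by (simp only: prod.distrib prod_constant card_lessThan)
  finally show ?thesis .
qed

lemma two_mul_div_pow4_le:
  fixes A M k :: real
  assumes "0 \<le> A" and "4 * A + 1 \<le> M" and "k + 1 \<le> M" and "0 \<le> k"
  shows "2 * M / (M - A)^4 \<le> 32 / (k + 1)^2"
proof -
  have "1 \<le> M" "0 < M - A" using assms by simp_all
  have "M^4 / 16 \<le> (M - A)^4"
    using power_mono[of "M / 2" "M - A" 4] assms by (simp add: power_divide)
  then have "2 * M / (M - A)^4 \<le> 2 * M / (M^4 / 16)"
    using \<open>1 \<le> M\<close> \<open>0 < M - A\<close> by (intro divide_left_mono) auto
  also have "\<dots> = 32 / M^3"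
    using \<open>1 \<le> M\<close> by (simp add: field_simps eval_nat_numeral)
  also have "\<dots> \<le> 32 / (k + 1)^2"
  proof (rule divide_left_mono)
    have "(k + 1)^2 \<le> M^2" using assms by (intro power_mono) auto
    also have "\<dots> \<le> M^3" using \<open>1 \<le> M\<close> by (simp add: power_increasing)
    finally show "(k + 1)^2 \<le> M^3" .
  qed (use \<open>1 \<le> M\<close> assms in auto)
  finally show ?thesis .
qed

lemma summable_inverse_Suc_square: "summable (\<lambda>k. 1 / (real k + 1)\<^sup>2)"
proof -
  have "summable (\<lambda>k. inverse (real k ^ 2))" by (rule inverse_power_summable) simp
  then have "summable (\<lambda>k. inverse (real (k + 1) ^ 2))" by (subst summable_iff_shift)
  then show ?thesis by (simp add: divide_inverse add.commute)
qed

lemma of_nat_Suc_times_central_binomial: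
  "(of_nat n + 1) * of_nat ((2 * Suc n) choose Suc n)
     = 2 * (2 * of_nat n + 1) * (of_nat ((2 * n) choose n) :: 'a::comm_semiring_1)"
proof -
  have "Suc n * ((2 * Suc n) choose Suc n) = 2 * (Suc n * (Suc (2 * n) choose n))"
    using Suc_times_binomial[of n "Suc (2 * n)"] by simp
  also have "Suc n * (Suc (2 * n) choose n) = Suc (2 * n) * ((2 * n) choose n)"
    using Suc_times_binomial[of n "2 * n"] binomial_symmetric[of n "Suc (2 * n)"] by simp
  finally have "Suc n * ((2 * Suc n) choose Suc n) = 2 * (2 * n + 1) * ((2 * n) choose n)"
    by simp
  then show ?thesis
    by (metis (mono_tags) of_nat_mult of_nat_Suc of_nat_add of_nat_numeral of_nat_1 add.commute)
qed

definition pochhammer_pm :: "complex \<Rightarrow> complex \<Rightarrow> nat \<Rightarrow> complex" where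
  "pochhammer_pm a b n = pochhammer (1 + a + b) n * pochhammer (1 + a - b) n
     * pochhammer (1 - a + b) n * pochhammer (1 - a - b) n"

definition wz_coeff :: "complex \<Rightarrow> complex \<Rightarrow> nat \<Rightarrow> complex" where
  "wz_coeff a b n = (-1)^n * pochhammer_pm a b n / (2 * of_nat ((2 * n) choose n))"

definition wz_R :: "complex \<Rightarrow> complex \<Rightarrow> nat \<Rightarrow> complex \<Rightarrow> complex" where
  "wz_R a b n y = 2 * y\<^sup>2 + 2 * (3 * of_nat n + 1) * y + 5 * (of_nat n)\<^sup>2 + 4 * of_nat n + 1 - a\<^sup>2 - b\<^sup>2"

definition wz_F :: "complex \<Rightarrow> complex \<Rightarrow> complex \<Rightarrow> nat \<Rightarrow> nat \<Rightarrow> complex" where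
  "wz_F x a b n k = wz_coeff a b n * (2 * (x + of_nat k) + of_nat n) / quartic_block a b n (x + of_nat k)"

definition wz_G :: "complex \<Rightarrow> complex \<Rightarrow> complex \<Rightarrow> nat \<Rightarrow> nat \<Rightarrow> complex" where
  "wz_G x a b n k = wz_coeff a b n * wz_R a b n (x + of_nat k)
     / (2 * (2 * of_nat n + 1) * quartic_block a b n (x + of_nat k))"

lemma two_mul_Suc_neq_zero: "(2 * (2 * of_nat n + 1) :: complex) \<noteq> 0"
  by (metis of_nat_Suc of_nat_neq_0 add.commute of_nat_mult of_nat_numeral mult_eq_0_iff zero_neq_numeral)

lemma pochhammer_pm_Suc:
  "pochhammer_pm a b (Suc n) = pochhammer_pm a b n * quartic (a + b) (a - b) (of_nat n + 1)"
  unfolding pochhammer_pm_def pochhammer_Suc quartic_def by (simp add: power2_eq_square algebra_simps)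

lemma wz_coeff_Suc:
  "wz_coeff a b (Suc n)
     = - wz_coeff a b n * (of_nat n + 1) * quartic (a + b) (a - b) (of_nat n + 1) / (2 * (2 * of_nat n + 1))"
proof -
  define C :: complex where "C = of_nat ((2 * n) choose n)"
  define X :: complex where "X = of_nat ((2 * Suc n) choose Suc n)"
  define d :: complex where "d = 2 * (2 * of_nat n + 1)"
  have "C \<noteq> 0" by (simp add: C_def)
  have "d \<noteq> 0"
    unfolding d_def by (rule two_mul_Suc_neq_zero)
  have "(of_nat n + 1 :: complex) \<noteq> 0"
    by (metis of_nat_Suc of_nat_neq_0 add.commute)
  have "(of_nat n + 1) * X = d * C"
    unfolding C_def X_def d_def
    by (rule of_nat_Suc_times_central_binomial)
  then have X: "X = d * C / (of_nat n + 1)"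
    using \<open>of_nat n + 1 \<noteq> 0\<close> by (simp add: field_simps)
  show ?thesis
    unfolding wz_coeff_def pochhammer_pm_Suc C_def[symmetric] X_def[symmetric] d_def[symmetric] X
    using \<open>C \<noteq> 0\<close> \<open>d \<noteq> 0\<close> \<open>of_nat n + 1 \<noteq> 0\<close>
    by (simp add: field_simps)
qed

lemma wz_R_difference:
  "wz_R a b n (y + 1) * quartic a b y - wz_R a b n y * quartic a b (y + of_nat n + 1)
     = - (of_nat n + 1) * quartic (a + b) (a - b) (of_nat n + 1) * (2 * y + of_nat n + 1)
       - 2 * (2 * of_nat n + 1) * (2 * y + of_nat n) * quartic a b (y + of_nat n + 1)"
  unfolding wz_R_def quartic_def by algebra

lemma q4_Suc:
  "q4 x a b (Suc n)
     = 2 * (2 * of_nat n + 1) * (2 * (x + of_nat n) + of_nat n) * quartic a b (x + of_nat n + of_nat n + 1)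
       + wz_R a b n (x + of_nat n + 1) * quartic a b (x + of_nat n)"
  unfolding q4_def wz_R_def quartic_def of_nat_Suc by algebra

lemma wz_F_0: "wz_F x a b 0 k = lhs4 x a b k"
proof -
  have "wz_F x a b 0 k = (x + of_nat k) / quartic a b (x + of_nat k)"
    unfolding wz_F_def wz_coeff_def pochhammer_pm_def quartic_block_def
    by (cases "quartic a b (x + of_nat k) = 0") (simp_all add: field_simps)
  then show ?thesis by (simp add: lhs4_def quartic_def add.commute)
qed

lemma rhs4_Suc:
  "rhs4 x a b (Suc n) = (-1)^n * pochhammer_pm a b n * (\<Prod>i<n. quartic a b (x + of_nat i))
     / ((of_nat n + 1) * of_nat ((2 * Suc n) choose Suc n)
        * ((\<Prod>i<n. quartic a b (x + of_nat i)) * quartic_block a b (Suc n) (x + of_nat n)))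
     * q4 x a b (Suc n)"
proof -
  define Q where "Q = (\<Prod>i<n. quartic a b (x + of_nat i))"
  define S where "S = quartic_block a b (Suc n) (x + of_nat n)"
  have "(-1) ^ (Suc n - 1)
      * pochhammer (1 + a + b) (Suc n - 1) * pochhammer (1 + a - b) (Suc n - 1)
      * pochhammer (1 - a + b) (Suc n - 1) * pochhammer (1 - a - b) (Suc n - 1)
      * pochhammer (x + a) (Suc n - 1) * pochhammer (x - a) (Suc n - 1)
      * pochhammer (x + b) (Suc n - 1) * pochhammer (x - b) (Suc n - 1)
      = (-1)^n * pochhammer_pm a b n * Q"
    unfolding Q_def pochhammer_quartic[symmetric] pochhammer_pm_def by (simp add: mult_ac)
  moreover have "of_nat (Suc n) * of_nat ((2 * Suc n) choose Suc n)
      * pochhammer (x + a) (2 * Suc n) * pochhammer (x - a) (2 * Suc n)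
      * pochhammer (x + b) (2 * Suc n) * pochhammer (x - b) (2 * Suc n)
      = (of_nat n + 1) * of_nat ((2 * Suc n) choose Suc n) * (Q * S)"
  proof -
    have "2 * Suc n = n + Suc (Suc n)" by simp
    then have "pochhammer (x + a) (2 * Suc n) * pochhammer (x - a) (2 * Suc n)
        * pochhammer (x + b) (2 * Suc n) * pochhammer (x - b) (2 * Suc n) = Q * S"
      unfolding Q_def S_def by (simp only: pochhammer_quartic_add)
    then show ?thesis by (simp add: mult_ac add.commute)
  qed
  ultimately show ?thesis unfolding rhs4_def Q_def[symmetric] S_def[symmetric] by (simp only:)
qed

lemma norm_wz_coeff_le:
  assumes "norm a + norm b \<le> r"
  shows "norm (wz_coeff a b n) \<le> pochhammer (1 + r) n ^ 4 / 2"
proof -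
  have poch: "norm (pochhammer (1 + s) n) \<le> pochhammer (1 + r) n" if "norm s \<le> norm a + norm b" for s :: complex
    using that assms norm_triangle_ineq[of 1 s] by (intro norm_pochhammer_le) simp
  have "0 \<le> r" using assms norm_ge_zero[of a] norm_ge_zero[of b] by linarith
  then have "0 \<le> pochhammer (1 + r) n" by (intro less_imp_le pochhammer_pos) simp
  have "norm (pochhammer_pm a b n) \<le> pochhammer (1 + r) n ^ 4"
  proof -
    have "norm (pochhammer_pm a b n) = norm (pochhammer (1 + (a + b)) n) * norm (pochhammer (1 + (a - b)) n)
        * norm (pochhammer (1 + (- a + b)) n) * norm (pochhammer (1 + (- a - b)) n)"
      unfolding pochhammer_pm_def by (simp add: norm_mult algebra_simps)
    also have "\<dots> \<le> pochhammer (1 + r) n * pochhammer (1 + r) n * pochhammer (1 + r) n * pochhammer (1 + r) n"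
      using norm_triangle_ineq[of a b] norm_triangle_ineq4[of a b]
        norm_triangle_ineq[of "- a" b] norm_triangle_ineq4[of "- a" b]
        \<open>0 \<le> pochhammer (1 + r) n\<close>
      by (intro mult_mono poch mult_nonneg_nonneg) auto
    finally show ?thesis by (simp add: power4_eq_xxxx)
  qed
  moreover have "1 \<le> real ((2 * n) choose n)"
    by (metis One_nat_def Suc_leI of_nat_1 of_nat_le_iff zero_less_binomial le_add2 mult_2)
  then have "norm (pochhammer_pm a b n) / (2 * real ((2 * n) choose n)) \<le> norm (pochhammer_pm a b n) / 2"
    by (intro divide_left_mono) auto
  ultimately show ?thesis
    unfolding wz_coeff_def by (simp add: norm_mult norm_divide norm_power)
qed

lemma norm_wz_F_numerator_le:
  fixes x :: "'a::real_normed_algebra_1"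
  assumes "4 * norm x + 1 \<le> real N" and "N \<le> M"
  shows "norm (2 * (x + of_nat M) + of_nat N) \<le> 4 * real M"
proof -
  have "norm (2 * (x + of_nat M) + of_nat N) \<le> 2 * norm (x + of_nat M) + real N"
    using norm_triangle_ineq[of "2 * (x + of_nat M)" "of_nat N"] norm_mult_ineq[of 2 "x + of_nat M"]
    by (simp only: norm_numeral norm_of_nat)
  also have "\<dots> \<le> 2 * norm x + 2 * real M + real N"
    using norm_triangle_ineq[of x "of_nat M"] by (simp add: norm_of_nat)
  also have "\<dots> \<le> 4 * real M"
    using assms norm_ge_zero[of x] of_nat_le_iff[of N M, where 'a = real] by linarith
  finally show ?thesis .
qed

lemma norm_wz_F_le:
  assumes N: "4 * (norm x + norm a + norm b) + 1 \<le> real N"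
  shows "norm (wz_F x a b N (k + N)) \<le> (3/4)^N * (32 / (real k + 1)^2)"
proof -
  define A where "A = norm x + norm a + norm b"
  define M where "M = k + N"
  define G where "G = (\<Prod>i<N. (real (M + Suc i) - A)^4)"
  have "0 \<le> A" "4 * A + 1 \<le> real N" "N \<le> M"
    using N by (simp_all add: A_def M_def)
  then have "A < real M" "0 < G" by (auto simp: G_def intro!: prod_pos)
  have coeff: "norm (wz_coeff a b N) \<le> (3/4)^N * G / 2"
    using norm_wz_coeff_le[of a b A N] pochhammer_pow4_le_geometric[of A N M]
      \<open>0 \<le> A\<close> \<open>4 * A + 1 \<le> real N\<close> \<open>N \<le> M\<close>
    by (simp add: A_def G_def)
  have "4 * norm x + 1 \<le> real N"
    using \<open>4 * A + 1 \<le> real N\<close> norm_ge_zero[of a] norm_ge_zero[of b]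
    unfolding A_def distrib_left by linarith
  then have numer: "norm (2 * (x + of_nat M) + of_nat N) \<le> 4 * real M"
    using \<open>N \<le> M\<close> by (rule norm_wz_F_numerator_le)
  have denom: "(real M - A)^4 * G \<le> norm (quartic_block a b N (x + of_nat M))"
    using norm_quartic_block_ge[of x a b M N, unfolded prod.lessThan_Suc_shift] \<open>A < real M\<close>
    by (simp add: A_def G_def)
  have "norm (wz_F x a b N (k + N))
      = norm (wz_coeff a b N) * norm (2 * (x + of_nat M) + of_nat N) / norm (quartic_block a b N (x + of_nat M))"
    unfolding wz_F_def M_def by (simp add: norm_mult norm_divide)
  also have "\<dots> \<le> ((3/4)^N * G / 2) * (4 * real M) / ((real M - A)^4 * G)"
    using coeff numer denom \<open>A < real M\<close> \<open>0 < G\<close> by (intro frac_le mult_mono) auto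
  also have "\<dots> = (3/4)^N * (2 * real M / (real M - A)^4)"
    using \<open>0 < G\<close> by (simp add: field_simps)
  also have "\<dots> \<le> (3/4)^N * (32 / (real k + 1)^2)"
    using \<open>0 \<le> A\<close> \<open>4 * A + 1 \<le> real N\<close>
    by (intro mult_left_mono two_mul_div_pow4_le) (auto simp: M_def)
  finally show ?thesis .
qed

lemma wz_G_tendsto_zero: "(\<lambda>k. wz_G x a b n k) \<longlonglongrightarrow> 0"
proof -
  define c :: complex where "c = 2 * (2 * of_nat n + 1)"
  have R: "wz_R a b n y = 2 * y\<^sup>2 + 2 * (3 * of_nat n + 1) * y + (5 * (of_nat n)\<^sup>2 + 4 * of_nat n + 1 - a\<^sup>2 - b\<^sup>2)" for y
    unfolding wz_R_def by (simp add: algebra_simps)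
  have "(\<lambda>k. wz_coeff a b n / c * (wz_R a b n (x + of_nat k) / quartic a b (x + of_nat k))
      * (\<Prod>i<n. inverse (quartic a b (x + of_nat (Suc i) + of_nat k))))
      \<longlonglongrightarrow> wz_coeff a b n / c * 0 * (\<Prod>i<n. 0)"
    unfolding R by (intro tendsto_intros quadratic_over_quartic_shift_tendsto_zero
      inverse_quartic_shift_tendsto_zero)
  moreover have "wz_G x a b n k = wz_coeff a b n / c * (wz_R a b n (x + of_nat k) / quartic a b (x + of_nat k))
      * (\<Prod>i<n. inverse (quartic a b (x + of_nat (Suc i) + of_nat k)))" for k
  proof -
    have "quartic_block a b n (x + of_nat k)
        = quartic a b (x + of_nat k) * (\<Prod>i<n. quartic a b (x + of_nat (Suc i) + of_nat k))"
      unfolding quartic_block_def prod.lessThan_Suc_shift by (simp add: add_ac)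
    then show ?thesis
      unfolding wz_G_def c_def by (simp add: prod_inversef[unfolded comp_def] divide_inverse mult_ac)
  qed
  ultimately show ?thesis by simp
qed

lemma wz_tail_tendsto_zero: "(\<lambda>N. \<Sum>k. wz_F x a b N (k + N)) \<longlonglongrightarrow> 0"
proof (rule Lim_null_comparison)
  define S where "S = (\<Sum>k. 32 * (1 / (real k + 1)\<^sup>2))"
  obtain N0 :: nat where N0: "4 * (norm x + norm a + norm b) + 1 \<le> real N0"
    using real_arch_simple by blast
  show "\<forall>\<^sub>F N in sequentially. norm (\<Sum>k. wz_F x a b N (k + N)) \<le> (3/4)^N * S"
    unfolding eventually_sequentially
  proof (intro exI allI impI)
    fix N assume "N0 \<le> N"
    then have "4 * (norm x + norm a + norm b) + 1 \<le> real N" using N0 by linarith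
    then have "norm (\<Sum>k. wz_F x a b N (k + N)) \<le> (\<Sum>k. (3/4)^N * (32 * (1 / (real k + 1)\<^sup>2)))"
      using norm_wz_F_le summable_inverse_Suc_square by (intro norm_suminf_le summable_mult) simp_all
    also have "\<dots> = (3/4)^N * S"
      unfolding S_def by (intro suminf_mult summable_mult summable_inverse_Suc_square)
    finally show "norm (\<Sum>k. wz_F x a b N (k + N)) \<le> (3/4)^N * S" .
  qed
  show "(\<lambda>N. (3/4)^N * S) \<longlonglongrightarrow> 0"
    by (intro tendsto_mult_left_zero LIMSEQ_power_zero) simp
qed

text \<open>The four terms of the WZ equation at \<open>(n, k)\<close> are \<open>wz_scale\<close> times polynomials.\<close>

definition wz_scale :: "complex \<Rightarrow> complex \<Rightarrow> complex \<Rightarrow> nat \<Rightarrow> nat \<Rightarrow> complex" where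
  "wz_scale x a b n k
     = wz_coeff a b n / (2 * (2 * of_nat n + 1) * quartic_block a b (Suc n) (x + of_nat k))"

context
  fixes x a b :: complex
  assumes quartic_nonzero: "\<And>m. quartic a b (x + of_nat m) \<noteq> 0"
begin

lemma quartic_block_nonzero: "quartic_block a b n (x + of_nat k) \<noteq> 0"
  unfolding quartic_block_def using quartic_nonzero by (simp add: add.assoc flip: of_nat_add)

lemma wz_F_eq_scale:
  "wz_F x a b n k = wz_scale x a b n k
     * (2 * (2 * of_nat n + 1) * (2 * (x + of_nat k) + of_nat n) * quartic a b (x + of_nat k + of_nat n + 1))"
proof -
  define c :: complex where "c = 2 * (2 * of_nat n + 1)"
  define P where "P = quartic_block a b n (x + of_nat k)"
  define q where "q = quartic a b (x + of_nat k + of_nat n + 1)"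
  have "P \<noteq> 0" "q \<noteq> 0"
    using quartic_block_nonzero quartic_nonzero[of "k + n + 1"] by (simp_all add: P_def q_def add_ac)
  then show ?thesis
    unfolding wz_F_def wz_scale_def quartic_block_Suc P_def[symmetric] c_def[symmetric] q_def[symmetric]
    using two_mul_Suc_neq_zero[of n, folded c_def] by (simp add: field_simps)
qed

lemma wz_F_Suc_eq_scale:
  "wz_F x a b (Suc n) k = wz_scale x a b n k
     * (- (of_nat n + 1) * quartic (a + b) (a - b) (of_nat n + 1) * (2 * (x + of_nat k) + of_nat n + 1))"
proof -
  define c :: complex where "c = 2 * (2 * of_nat n + 1)"
  define P where "P = quartic_block a b (Suc n) (x + of_nat k)"
  have "P \<noteq> 0" using quartic_block_nonzero by (simp add: P_def)
  then show ?thesis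
    unfolding wz_F_def wz_scale_def wz_coeff_Suc P_def[symmetric] c_def[symmetric]
    using two_mul_Suc_neq_zero[of n, folded c_def] by (simp add: field_simps)
qed

lemma wz_G_eq_scale:
  "wz_G x a b n k = wz_scale x a b n k * (wz_R a b n (x + of_nat k) * quartic a b (x + of_nat k + of_nat n + 1))"
proof -
  define c :: complex where "c = 2 * (2 * of_nat n + 1)"
  define P where "P = quartic_block a b n (x + of_nat k)"
  define q where "q = quartic a b (x + of_nat k + of_nat n + 1)"
  have "P \<noteq> 0" "q \<noteq> 0"
    using quartic_block_nonzero quartic_nonzero[of "k + n + 1"] by (simp_all add: P_def q_def add_ac)
  then show ?thesis
    unfolding wz_G_def wz_scale_def quartic_block_Suc P_def[symmetric] c_def[symmetric] q_def[symmetric]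
    using two_mul_Suc_neq_zero[of n, folded c_def] by (simp add: field_simps)
qed

lemma wz_G_Suc_eq_scale:
  "wz_G x a b n (Suc k) = wz_scale x a b n k * (wz_R a b n (x + of_nat k + 1) * quartic a b (x + of_nat k))"
proof -
  define c :: complex where "c = 2 * (2 * of_nat n + 1)"
  define P where "P = quartic_block a b n (x + of_nat k + 1)"
  define q where "q = quartic a b (x + of_nat k)"
  have "P \<noteq> 0" "q \<noteq> 0"
    using quartic_block_nonzero[of n "Suc k"] quartic_nonzero[of k] by (simp_all add: P_def q_def add_ac)
  moreover have Suc_k: "x + of_nat (Suc k) = x + of_nat k + 1" by simp
  ultimately show ?thesis
    unfolding wz_G_def Suc_k wz_scale_def quartic_block_Suc' P_def[symmetric] c_def[symmetric] q_def[symmetric]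
    using two_mul_Suc_neq_zero[of n, folded c_def] by (simp add: field_simps)
qed

lemma wz_equation: "wz_F x a b (Suc n) k - wz_F x a b n k = wz_G x a b n (Suc k) - wz_G x a b n k"
proof -
  have "wz_F x a b (Suc n) k - wz_F x a b n k = wz_scale x a b n k
      * (- (of_nat n + 1) * quartic (a + b) (a - b) (of_nat n + 1) * (2 * (x + of_nat k) + of_nat n + 1)
         - 2 * (2 * of_nat n + 1) * (2 * (x + of_nat k) + of_nat n) * quartic a b (x + of_nat k + of_nat n + 1))"
    by (simp only: wz_F_Suc_eq_scale wz_F_eq_scale[of n k] right_diff_distrib)
  also have "\<dots> = wz_scale x a b n k
      * (wz_R a b n (x + of_nat k + 1) * quartic a b (x + of_nat k)
         - wz_R a b n (x + of_nat k) * quartic a b (x + of_nat k + of_nat n + 1))"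
    by (simp only: wz_R_difference)
  also have "\<dots> = wz_G x a b n (Suc k) - wz_G x a b n k"
    by (simp only: wz_G_Suc_eq_scale wz_G_eq_scale[of n k] right_diff_distrib)
  finally show ?thesis .
qed

lemma rhs4_Suc_eq_scale: "rhs4 x a b (Suc n) = 2 * wz_scale x a b n n * q4 x a b (Suc n)"
proof -
  define Q where "Q = (\<Prod>i<n. quartic a b (x + of_nat i))"
  define S where "S = quartic_block a b (Suc n) (x + of_nat n)"
  define C :: complex where "C = of_nat ((2 * n) choose n)"
  define X :: complex where "X = of_nat ((2 * Suc n) choose Suc n)"
  define c :: complex where "c = 2 * (2 * of_nat n + 1)"
  have "Q \<noteq> 0" using quartic_nonzero by (simp add: Q_def)
  have "S \<noteq> 0" using quartic_block_nonzero by (simp add: S_def)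
  have "C \<noteq> 0" by (simp add: C_def)
  have "c \<noteq> 0" unfolding c_def by (rule two_mul_Suc_neq_zero)
  have X: "(of_nat n + 1) * X = c * C"
    unfolding X_def C_def c_def by (rule of_nat_Suc_times_central_binomial)
  have "rhs4 x a b (Suc n) = (-1)^n * pochhammer_pm a b n * Q / ((of_nat n + 1) * X * (Q * S)) * q4 x a b (Suc n)"
    unfolding rhs4_Suc Q_def S_def X_def ..
  also have "\<dots> = (-1)^n * pochhammer_pm a b n / (c * C * S) * q4 x a b (Suc n)"
    unfolding X using \<open>Q \<noteq> 0\<close> by simp
  also have "\<dots> = 2 * wz_scale x a b n n * q4 x a b (Suc n)"
    unfolding wz_scale_def wz_coeff_def S_def[symmetric] C_def[symmetric] c_def[symmetric]
    using \<open>S \<noteq> 0\<close> \<open>C \<noteq> 0\<close> \<open>c \<noteq> 0\<close> by (simp add: field_simps)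
  finally show ?thesis .
qed

lemma wz_diagonal: "wz_F x a b n n + wz_G x a b n (Suc n) = rhs4 x a b (Suc n) / 2"
  unfolding wz_F_eq_scale wz_G_Suc_eq_scale rhs4_Suc_eq_scale q4_Suc by (simp add: algebra_simps)

lemma summable_wz_F: "summable (wz_F x a b n)"
proof -
  obtain N :: nat where N: "4 * (norm x + norm a + norm b) + 1 \<le> real N"
    using real_arch_simple by blast
  have "summable (\<lambda>k. (3/4)^N * (32 * (1 / (real k + 1)\<^sup>2)))"
    by (intro summable_mult summable_inverse_Suc_square)
  then have "summable (\<lambda>k. wz_F x a b N (k + N))"
    by (rule summable_comparison_test') (use norm_wz_F_le[OF N] in simp)
  then have "summable (wz_F x a b N)" by simp
  then show ?thesis
    using summable_wz_iff[where F = "wz_F x a b" and G = "wz_G x a b",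
        OF wz_equation wz_G_tendsto_zero, of n N]
    by simp
qed

end

lemma quartic_shift_nonzero:
  fixes x a b :: complex
  assumes "\<forall>m::nat. x + a \<noteq> - of_nat m" and "\<forall>m::nat. x - a \<noteq> - of_nat m"
    and "\<forall>m::nat. x + b \<noteq> - of_nat m" and "\<forall>m::nat. x - b \<noteq> - of_nat m"
  shows "quartic a b (x + of_nat m) \<noteq> 0"
proof -
  have "x + of_nat m + s \<noteq> 0" if "\<forall>m::nat. x + s \<noteq> - of_nat m" for s
    using that by (metis add.commute add.left_commute add_eq_0_iff)
  from this[of "- a"] this[of a] this[of "- b"] this[of b] assms show ?thesis
    unfolding quartic_factor by simp
qed

theorem theorem4:
  fixes \<alpha> a b :: complex
  assumes "\<forall>m::nat. \<alpha> + a \<noteq> - of_nat m"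
      and "\<forall>m::nat. \<alpha> - a \<noteq> - of_nat m"
      and "\<forall>m::nat. \<alpha> + b \<noteq> - of_nat m"
      and "\<forall>m::nat. \<alpha> - b \<noteq> - of_nat m"
  shows "summable (lhs4 \<alpha> a b)
       \<and> summable (\<lambda>n. rhs4 \<alpha> a b (Suc n))
       \<and> (\<Sum>k. lhs4 \<alpha> a b k) = (1/2) * (\<Sum>n. rhs4 \<alpha> a b (Suc n))"
proof -
  have nonzero: "quartic a b (\<alpha> + of_nat m) \<noteq> 0" for m
    using quartic_shift_nonzero assms by blast
  have "(\<lambda>n. wz_F \<alpha> a b n n + wz_G \<alpha> a b n (Suc n)) sums (\<Sum>k. wz_F \<alpha> a b 0 k)"
    by (rule wz_diagonal_sums[OF wz_equation[OF nonzero] wz_G_tendsto_zero summable_wz_F[OF nonzero]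
      wz_tail_tendsto_zero])
  then have "(\<lambda>n. rhs4 \<alpha> a b (Suc n) / 2) sums (\<Sum>k. lhs4 \<alpha> a b k)"
    by (simp add: wz_diagonal[OF nonzero] wz_F_0)
  then have "(\<lambda>n. 2 * (rhs4 \<alpha> a b (Suc n) / 2)) sums (2 * (\<Sum>k. lhs4 \<alpha> a b k))"
    by (rule sums_mult)
  then have "(\<lambda>n. rhs4 \<alpha> a b (Suc n)) sums (2 * (\<Sum>k. lhs4 \<alpha> a b k))"
    by simp
  moreover have "wz_F \<alpha> a b 0 = lhs4 \<alpha> a b"
    by (simp add: fun_eq_iff wz_F_0)
  then have "summable (lhs4 \<alpha> a b)"
    using summable_wz_F[OF nonzero, of 0] by simp
  ultimately show ?thesis by (simp add: sums_iff)
qed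

end
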